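(* Let $N\ge1$, and let $A_n\to A$ in $M_N(\mathbb{C})$. Then $\liminf_{n\to\infty}\psi(A_n)\ge\psi(A)$.
   Context: $M_N(\mathbb{C})$ denotes the algebra of complex $N\times N$ matrices acting on $\mathbb{C}^N$ with the Euclidean inner product, equipped with the operator norm. For $A\in M_N(\mathbb{C})$, the numerical range is $W(A):=\{\langle Ax,x\rangle: x\in\mathbb{C}^N,\ \|x\|=1\}$. The Crouzeix ratio of $A$ is $\psi(A):=\sup\{\|p(A)\|: p \text{ a polynomial with } |p|\le 1 \text{ on } W(A)\}$. *)

theory Defs
  imports "HOL-Analysis.Analysis" "HOL-Computational_Algebra.Polynomial" "HOL-Library.Extended_Real"
begin

text \<open>Complex N x N matrices are modelled as complex ^ 'n ^ 'n with 'n a finite type (N = CARD('n) \<ge> 1).\<close>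

definition cinner :: "complex ^ 'n::finite \<Rightarrow> complex ^ 'n \<Rightarrow> complex" where
  "cinner x y = (\<Sum>i\<in>UNIV. x $ i * cnj (y $ i))"

definition numerical_range :: "complex ^ 'n ^ 'n::finite \<Rightarrow> complex set" where
  "numerical_range A = {cinner (A *v x) x | x. norm x = 1}"

primrec matpow :: "complex ^ 'n ^ 'n::finite \<Rightarrow> nat \<Rightarrow> complex ^ 'n ^ 'n" where
  "matpow A 0 = mat 1"
| "matpow A (Suc k) = A ** matpow A k"

definition poly_mat :: "complex poly \<Rightarrow> complex ^ 'n ^ 'n::finite \<Rightarrow> complex ^ 'n ^ 'n" where
  "poly_mat p A = (\<chi> i j. \<Sum>k\<le>degree p. coeff p k * matpow A k $ i $ j)"

definition op_norm :: "complex ^ 'n ^ 'n::finite \<Rightarrow> real" where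
  "op_norm M = onorm (\<lambda>x. M *v x)"

text \<open>Crouzeix ratio (as an extended real, the supremum being taken without presupposing finiteness).\<close>
definition crouzeix_ratio :: "complex ^ 'n ^ 'n::finite \<Rightarrow> ereal" where
  "crouzeix_ratio A = (SUP p\<in>{p. \<forall>z\<in>numerical_range A. cmod (poly p z) \<le> 1}. ereal (op_norm (poly_mat p A)))"

end

theory Submission
  imports Defs
begin

text \<open>Let \<open>p\<close> satisfy \<open>|p| \<le> 1\<close> on \<open>W(B)\<close>. Since \<open>(M, u) \<mapsto> p(\<langle>Mu, u\<rangle>)\<close> is jointly continuous
  and the unit sphere is compact, \<open>|p| \<le> 1 + \<epsilon>\<close> on \<open>W(A\<^sub>n)\<close> for all large \<open>n\<close>. Hence
  \<open>p / (1 + \<epsilon>)\<close> is admissible for \<open>A\<^sub>n\<close>, and \<open>\<psi>(A\<^sub>n) \<ge> \<parallel>p(A\<^sub>n)\<parallel> / (1 + \<epsilon>) \<longrightarrow> \<parallel>p(B)\<parallel> / (1 + \<epsilon>)\<close>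
  by continuity of the operator norm. Letting \<open>\<epsilon> \<rightarrow> 0\<close> and taking the supremum over \<open>p\<close>
  gives the claim.\<close>

lemma eventually_uniformly_close_on_compact:
  fixes g :: "'a::topological_space \<times> 'b::topological_space \<Rightarrow> 'c::metric_space"
  assumes "continuous_on (UNIV \<times> C) g" "compact C" "(A \<longlongrightarrow> B) F" "e > 0"
  shows "eventually (\<lambda>n. \<forall>t\<in>C. dist (g (A n, t)) (g (B, t)) \<le> e) F"
proof -
  obtain X where "B \<in> X" "open X"
    and close: "\<forall>x\<in>X \<inter> UNIV. \<forall>t\<in>C. dist (g (x, t)) (g (B, t)) \<le> e"
    using continuous_on_prod_compactE[OF assms(1,2) UNIV_I assms(4)] by metis
  have "eventually (\<lambda>n. A n \<in> X) F"
    using topological_tendstoD[OF assms(3) \<open>open X\<close> \<open>B \<in> X\<close>] .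
  then show ?thesis
    by eventually_elim (use close in blast)
qed

lemma continuous_on_quadratic_form:
  "continuous_on UNIV (\<lambda>z. cinner (fst z *v snd z) (snd z) :: complex)"
  unfolding cinner_def matrix_vector_mult_def
  by (intro continuous_intros)

lemma eventually_numerical_range_norm_le:
  fixes A :: "'i \<Rightarrow> complex ^ 'n ^ 'n::finite" and f :: "complex \<Rightarrow> 'a::real_normed_vector"
  assumes "(A \<longlongrightarrow> B) F" "continuous_on UNIV f"
    and "\<forall>z\<in>numerical_range B. norm (f z) \<le> c" "e > 0"
  shows "eventually (\<lambda>n. \<forall>z\<in>numerical_range (A n). norm (f z) \<le> c + e) F"
proof -
  define g where
    "g = (\<lambda>z :: (complex ^ 'n ^ 'n) \<times> (complex ^ 'n). f (cinner (fst z *v snd z) (snd z)))"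
  have "continuous_on UNIV g"
    unfolding g_def by (rule continuous_on_compose2[OF assms(2) continuous_on_quadratic_form]) simp
  then have "continuous_on (UNIV \<times> sphere 0 1) g"
    by (rule continuous_on_subset) simp
  from eventually_uniformly_close_on_compact[OF this compact_sphere assms(1,4)]
  show ?thesis
  proof eventually_elim
    case (elim n)
    show ?case
    proof
      fix z assume "z \<in> numerical_range (A n)"
      then obtain u where u: "norm u = 1" "z = cinner (A n *v u) u"
        by (auto simp: numerical_range_def)
      have "norm (f z) \<le> dist (f z) (g (B, u)) + norm (g (B, u))"
        using norm_triangle_sub[of "f z" "g (B, u)"] by (simp add: dist_norm)
      also have "\<dots> \<le> e + c"
        using elim assms(3) u by (intro add_mono) (auto simp: g_def numerical_range_def)
      finally show "norm (f z) \<le> c + e" by simp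
    qed
  qed
qed

lemma matpow_tendsto:
  assumes "(A \<longlongrightarrow> B) F"
  shows "((\<lambda>n. matpow (A n) k) \<longlongrightarrow> matpow B k) F"
proof (induction k)
  case (Suc k)
  then show ?case
    unfolding matpow.simps matrix_matrix_mult_def by (intro tendsto_intros assms)
qed simp

lemma poly_mat_tendsto:
  assumes "(A \<longlongrightarrow> B) F"
  shows "((\<lambda>n. poly_mat p (A n)) \<longlongrightarrow> poly_mat p B) F"
  unfolding poly_mat_def by (intro tendsto_intros matpow_tendsto assms)

lemma poly_mat_smult_of_real:
  "poly_mat (smult (of_real c) p) M = c *\<^sub>R poly_mat p M"
proof (cases "c = 0")
  case False
  then show ?thesis
    by (simp add: poly_mat_def vec_eq_iff degree_smult_eq)
      (simp add: scaleR_conv_of_real sum_distrib_left mult.assoc)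
qed (simp add: poly_mat_def vec_eq_iff)

lemma bounded_bilinear_matrix_vector_mult:
  "bounded_bilinear ((*v) :: 'a::{euclidean_space, real_algebra_1} ^ 'n ^ 'm \<Rightarrow> _)"
  unfolding bilinear_conv_bounded_bilinear[symmetric] bilinear_def
  by (auto intro!: linearI simp: vec_eq_iff matrix_vector_mult_def sum.distrib distrib_right
      scaleR_sum_right)

lemma op_norm_scaleR: "op_norm (c *\<^sub>R M) = \<bar>c\<bar> * op_norm M"
proof -
  have "(\<lambda>x. (c *\<^sub>R M) *v x) = (\<lambda>x. c *\<^sub>R (M *v x))"
    by (simp add: fun_eq_iff vec_eq_iff matrix_vector_mult_def scaleR_sum_right)
  then show ?thesis
    unfolding op_norm_def by (simp add: onorm_scaleR)
qed

lemma continuous_on_op_norm: "continuous_on UNIV (op_norm :: complex ^ 'n ^ 'n::finite \<Rightarrow> real)"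
proof -
  obtain K where "K > 0"
    and K: "\<And>(M :: complex ^ 'n ^ 'n) x. norm (M *v x) \<le> norm M * norm x * K"
    using bounded_bilinear.pos_bounded[OF bounded_bilinear_matrix_vector_mult] by blast
  have op_norm_le: "op_norm M \<le> norm M * K" for M :: "complex ^ 'n ^ 'n"
    unfolding op_norm_def by (rule onorm_le) (metis K mult.commute mult.left_commute)
  have op_norm_diff: "op_norm M - op_norm N \<le> K * dist M N" for M N :: "complex ^ 'n ^ 'n"
  proof -
    have "op_norm M = onorm (\<lambda>x. N *v x + (M - N) *v x)"
      unfolding op_norm_def by (simp add: matrix_vector_mult_diff_rdistrib)
    also have "\<dots> \<le> op_norm N + op_norm (M - N)"
      unfolding op_norm_def by (intro onorm_triangle) simp_all
    finally show ?thesis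
      using op_norm_le[of "M - N"] by (simp add: dist_norm mult.commute)
  qed
  have "K-lipschitz_on UNIV (op_norm :: complex ^ 'n ^ 'n \<Rightarrow> real)"
  proof (rule lipschitz_onI)
    show "dist (op_norm M) (op_norm N) \<le> K * dist M N" for M N :: "complex ^ 'n ^ 'n"
      using op_norm_diff[of M N] op_norm_diff[of N M] by (simp add: dist_real_def dist_commute)
  qed (use \<open>K > 0\<close> in simp)
  then show ?thesis by (rule lipschitz_on_continuous_on)
qed

lemma crouzeix_ratio_ge_scaled:
  assumes "c > 0" "\<forall>z\<in>numerical_range M. cmod (poly p z) \<le> c"
  shows "ereal (op_norm (poly_mat p M) / c) \<le> crouzeix_ratio M"
proof -
  define q where "q = smult (of_real (1 / c)) p"
  have "\<forall>z\<in>numerical_range M. cmod (poly q z) \<le> 1"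
    using assms by (auto simp: q_def norm_divide divide_le_eq_1)
  then have "ereal (op_norm (poly_mat q M)) \<le> crouzeix_ratio M"
    unfolding crouzeix_ratio_def by (intro SUP_upper) simp
  moreover have "op_norm (poly_mat q M) = op_norm (poly_mat p M) / c"
    unfolding q_def poly_mat_smult_of_real op_norm_scaleR using \<open>c > 0\<close> by simp
  ultimately show ?thesis by simp
qed

lemma liminf_crouzeix_ratio_ge_scaled:
  fixes A :: "nat \<Rightarrow> complex ^ 'n ^ 'n::finite"
  assumes "A \<longlonglongrightarrow> B" "\<forall>z\<in>numerical_range B. cmod (poly p z) \<le> 1" "e > 0"
  shows "ereal (op_norm (poly_mat p B) / (1 + e)) \<le> liminf (\<lambda>n. crouzeix_ratio (A n))"
proof -
  have "(\<lambda>n. ereal (op_norm (poly_mat p (A n)) / (1 + e)))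
      \<longlonglongrightarrow> ereal (op_norm (poly_mat p B) / (1 + e))"
    by (intro tendsto_intros continuous_on_tendsto_compose[OF continuous_on_op_norm]
        poly_mat_tendsto assms(1)) (use \<open>e > 0\<close> in simp_all)
  then have "ereal (op_norm (poly_mat p B) / (1 + e))
      = liminf (\<lambda>n. ereal (op_norm (poly_mat p (A n)) / (1 + e)))"
    using lim_imp_Liminf[OF trivial_limit_sequentially] by metis
  also have "\<dots> \<le> liminf (\<lambda>n. crouzeix_ratio (A n))"
    using eventually_numerical_range_norm_le[OF assms(1) continuous_on_poly[OF continuous_on_id]
        assms(2,3)]
    by (intro Liminf_mono)
      (use \<open>e > 0\<close> in \<open>auto elim!: eventually_mono intro!: crouzeix_ratio_ge_scaled\<close>)
  finally show ?thesis .
qed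

theorem theorem2p1:
  fixes A :: "nat \<Rightarrow> complex ^ 'n ^ 'n::finite" and B :: "complex ^ 'n ^ 'n"
  assumes "A \<longlonglongrightarrow> B"
  shows "liminf (\<lambda>n. crouzeix_ratio (A n)) \<ge> crouzeix_ratio B"
  unfolding crouzeix_ratio_def[of B]
proof (rule SUP_least)
  fix p assume "p \<in> {p. \<forall>z\<in>numerical_range B. cmod (poly p z) \<le> 1}"
  then have bound: "ereal (op_norm (poly_mat p B) / (1 + e)) \<le> liminf (\<lambda>n. crouzeix_ratio (A n))"
    if "e > 0" for e
    using liminf_crouzeix_ratio_ge_scaled[OF assms _ that] by simp
  have "((\<lambda>e. op_norm (poly_mat p B) / (1 + e)) \<longlongrightarrow> op_norm (poly_mat p B) / (1 + 0))
      (at_right 0)"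
    by (intro tendsto_intros) simp_all
  then have "((\<lambda>e. ereal (op_norm (poly_mat p B) / (1 + e))) \<longlongrightarrow> ereal (op_norm (poly_mat p B)))
      (at_right 0)"
    by simp
  from tendsto_upperbound[OF this eventually_mono[OF eventually_at_right_less[of 0] bound]]
  show "ereal (op_norm (poly_mat p B)) \<le> liminf (\<lambda>n. crouzeix_ratio (A n))"
    by simp
qed

end
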